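(* Let $\delta\in(0,\frac14]$ and let $h:[0,\delta]\to\mathbb{R}$ be continuous with $h(0)=0$ and $h(\delta)=1$. Then there exist $\bar r\in(0,\delta)$ and a smooth function $l:[0,\delta]\to\mathbb{R}$ such that $h-l$ attains a local minimum at $\bar r$ and $$l'(\bar r)\geq\frac{1}{4\delta}\qquad\text{and}\qquad \frac{l''(\bar r)}{1+(l'(\bar r))^2}\geq -2\,l'(\bar r).$$ *)

theory Defs
  imports "HOL-Analysis.Analysis"
begin

text \<open>A function is smooth on a set S if it is infinitely differentiable on some
open neighbourhood of S (for S a closed interval this is the usual notion of a
smooth function on the closed interval).\<close>
definition smooth_on :: "real set \<Rightarrow> (real \<Rightarrow> real) \<Rightarrow> bool" where
  "smooth_on S f \<longleftrightarrow>
     (\<exists>U. open U \<and> S \<subseteq> U \<and> (\<forall>n. ((deriv ^^ n) f) differentiable_on U))"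

end

theory Submission
  imports Defs "HOL-Complex_Analysis.Complex_Analysis"
begin

text \<open>
  By continuity h stays below 1/8 on some [0, x1], and some step [a, a + \<Delta>] of a fine
  enough partition of [0, x1] has increment h (a + \<Delta>) - h a < \<surd>\<Delta>/2. Compare h with
  l x = Re \<surd>(x - a + i \<Delta>/2) + x/(4 \<delta>), a smoothing of \<surd>(x - a) that rises by at least
  \<surd>\<Delta>/2 on [a, a + \<Delta>] and stays below 5/8 + 1/4 at \<delta>: then h - l is smaller at a + \<Delta>
  than at a and at \<delta>, so it has an interior minimum r on [a, \<delta>]. With
  w = 1/(2 \<surd>(r - a + i \<Delta>/2)), which has Re w \<ge> 0, one gets l' r = Re w + 1/(4 \<delta>) and
  l'' r = -2 Re (w^3) \<ge> -2 (Re w)^3, whence both inequalities.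
\<close>

lemma exists_increment_less:
  fixes f :: "nat \<Rightarrow> real"
  assumes "f n - f 0 < real n * s"
  shows "\<exists>k<n. f (Suc k) - f k < s"
proof (rule ccontr)
  assume "\<not> ?thesis"
  then have "\<forall>k\<in>{..<n}. s \<le> f (Suc k) - f k"
    by (meson not_less lessThan_iff)
  then have "real n * s \<le> (\<Sum>k<n. f (Suc k) - f k)"
    using sum_bounded_below[of "{..<n}" s "\<lambda>k. f (Suc k) - f k"] by simp
  then show False
    using assms by (simp add: sum_lessThan_telescope)
qed

text \<open>The n increments of h along the partition of [0, x] into steps \<Delta> = x/n add up to
  h x - h 0, while n c \<surd>\<Delta> = c \<surd>(n x) is unbounded in n.\<close>

lemma exists_small_sqrt_increment:
  fixes h :: "real \<Rightarrow> real"
  assumes "0 < x" "0 < c"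
  shows "\<exists>a \<Delta>. 0 \<le> a \<and> 0 < \<Delta> \<and> a + \<Delta> \<le> x \<and> h (a + \<Delta>) - h a < c * sqrt \<Delta>"
proof -
  obtain n :: nat where n: "(h x - h 0)\<^sup>2 < real n * (x * c\<^sup>2)"
    using ex_less_of_nat_mult assms by (metis mult_pos_pos zero_less_power)
  then have "0 < n"
    by (auto intro: gr0I)
  define \<Delta> where "\<Delta> = x / real n"
  have \<Delta>: "0 < \<Delta>" "real n * \<Delta> = x"
    using \<open>0 < n\<close> assms(1) by (auto simp: \<Delta>_def)
  have "(h x - h 0)\<^sup>2 < (real n * (c * sqrt \<Delta>))\<^sup>2"
    using n \<Delta> by (simp add: power2_eq_square algebra_simps)
  then have "h (real n * \<Delta>) - h (real 0 * \<Delta>) < real n * (c * sqrt \<Delta>)"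
    using \<Delta> assms(2) by (auto intro: power2_less_imp_less)
  then obtain k where "k < n" and k: "h (real (Suc k) * \<Delta>) - h (real k * \<Delta>) < c * sqrt \<Delta>"
    using exists_increment_less[of "\<lambda>k. h (real k * \<Delta>)"] by blast
  have "real (Suc k) * \<Delta> \<le> real n * \<Delta>"
    using \<open>k < n\<close> \<Delta>(1) by (intro mult_right_mono) auto
  then show ?thesis
    using k \<Delta> by (intro exI[of _ "real k * \<Delta>"] exI[of _ \<Delta>]) (auto simp: algebra_simps)
qed

lemma continuous_attains_inf_interior:
  fixes g :: "real \<Rightarrow> real"
  assumes "continuous_on {a..c} g" "b \<in> {a..c}" "g b < g a" "g b < g c"
  obtains r where "r \<in> {a<..<c}" "\<forall>y\<in>{a..c}. g r \<le> g y"
proof -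
  obtain r where r: "r \<in> {a..c}" "\<forall>y\<in>{a..c}. g r \<le> g y"
    using continuous_attains_inf[OF compact_Icc _ assms(1)] assms(2) by auto
  moreover have "r \<noteq> a" "r \<noteq> c"
    using r assms(2-4) by force+
  ultimately show thesis
    using that[of r] by force
qed

lemma continuous_on_less_near_left:
  fixes h :: "real \<Rightarrow> real"
  assumes "continuous_on {0..\<delta>} h" "0 < \<delta>" "h 0 < c"
  obtains x\<^sub>1 where "0 < x\<^sub>1" "x\<^sub>1 \<le> \<delta>" "\<forall>x\<in>{0..x\<^sub>1}. h x < c"
proof -
  obtain d where "0 < d" and d: "\<forall>x\<in>{0..\<delta>}. dist x 0 < d \<longrightarrow> dist (h x) (h 0) < c - h 0"
    using continuous_on_iff[THEN iffD1, OF assms(1), rule_format, of 0 "c - h 0"] assms(2,3) by auto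
  show thesis
  proof (rule that[of "min \<delta> (d / 2)"])
    show "0 < min \<delta> (d / 2)" "min \<delta> (d / 2) \<le> \<delta>"
      using \<open>0 < d\<close> assms(2) by auto
    show "\<forall>x\<in>{0..min \<delta> (d / 2)}. h x < c"
    proof
      fix x assume "x \<in> {0..min \<delta> (d / 2)}"
      then have "x \<in> {0..\<delta>}" "dist x 0 < d"
        using \<open>0 < d\<close> by (auto simp: dist_real_def)
      then show "h x < c"
        using d by (auto simp: dist_real_def)
    qed
  qed
qed

lemma has_real_derivative_Re_holomorphic:
  assumes "F holomorphic_on S" "open S" "of_real x \<in> S"
  shows "((\<lambda>t. Re (F (of_real t))) has_real_derivative Re (deriv F (of_real x))) (at x)"
proof -
  have "(F has_field_derivative deriv F (of_real x)) (at (of_real x))"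
    using assms by (meson holomorphic_derivI)
  then have "((\<lambda>t. F (of_real t)) has_vector_derivative deriv F (of_real x)) (at x)"
    by (rule has_vector_derivative_real_field)
  then have "((\<lambda>t. Re (F (of_real t))) has_vector_derivative Re (deriv F (of_real x))) (at x)"
    by (rule bounded_linear.has_vector_derivative[OF bounded_linear_Re])
  then show ?thesis by (simp add: has_real_derivative_iff_has_vector_derivative)
qed

lemma higher_deriv_Re_holomorphic:
  assumes "F holomorphic_on S" "open S" "\<And>x::real. of_real x \<in> S"
  shows "(deriv ^^ n) (\<lambda>x. Re (F (of_real x))) = (\<lambda>x. Re ((deriv ^^ n) F (of_real x)))"
proof (induction n)
  case 0
  then show ?case by simp
next
  case (Suc n)
  have "deriv (\<lambda>x. Re ((deriv ^^ n) F (of_real x))) x = Re ((deriv ^^ Suc n) F (of_real x))" for x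
    using has_real_derivative_Re_holomorphic[OF holomorphic_higher_deriv[OF assms(1,2)] assms(2,3)]
    by (simp add: DERIV_imp_deriv)
  then show ?case by (simp add: Suc.IH)
qed

lemma smooth_on_Re_holomorphic:
  assumes "F holomorphic_on S" "open S" "\<And>x::real. of_real x \<in> S"
  shows "smooth_on A (\<lambda>x. Re (F (of_real x)))"
  unfolding smooth_on_def
proof (intro exI[of _ UNIV] conjI allI)
  fix n
  show "(deriv ^^ n) (\<lambda>x. Re (F (of_real x))) differentiable_on UNIV"
    unfolding higher_deriv_Re_holomorphic[OF assms] differentiable_on_def
    using has_real_derivative_Re_holomorphic[OF holomorphic_higher_deriv[OF assms(1,2)] assms(2,3)]
    by (meson differentiable_at_withinI real_differentiable_def)
qed auto

lemma continuous_on_Re_holomorphic: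
  assumes "F holomorphic_on S" "open S" "\<And>x::real. of_real x \<in> S"
  shows "continuous_on A (\<lambda>x. Re (F (of_real x)))"
  using has_real_derivative_Re_holomorphic[OF assms(1,2,3)]
  by (intro continuous_at_imp_continuous_on ballI DERIV_isCont)

lemma Re_power3_le:
  assumes "0 \<le> Re w"
  shows "Re (w ^ 3) \<le> Re w ^ 3"
proof (cases w)
  case (Complex p q)
  then have "Re (w ^ 3) = p ^ 3 - 3 * p * q\<^sup>2"
    by (simp add: power3_eq_cube power2_eq_square algebra_simps)
  then show ?thesis using assms Complex by simp
qed

lemma Re_csqrt_Complex: "Re (csqrt (Complex t \<eta>)) = sqrt ((sqrt (t\<^sup>2 + \<eta>\<^sup>2) + t) / 2)"
  by (simp add: cmod_def)

lemma Re_csqrt_imaginary: "0 \<le> \<eta> \<Longrightarrow> Re (csqrt (Complex 0 \<eta>)) = sqrt (\<eta> / 2)"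
  by (simp add: cmod_def)

lemma sqrt_le_Re_csqrt:
  assumes "0 \<le> t" shows "sqrt t \<le> Re (csqrt (Complex t \<eta>))"
proof -
  have "t \<le> sqrt (t\<^sup>2 + \<eta>\<^sup>2)"
    by (simp add: real_le_rsqrt)
  then show ?thesis
    unfolding Re_csqrt_Complex by (intro real_sqrt_le_mono) simp
qed

lemma Re_csqrt_le:
  assumes "0 \<le> t" "0 \<le> \<eta>" shows "Re (csqrt (Complex t \<eta>)) \<le> sqrt (t + \<eta> / 2)"
proof -
  have "sqrt (t\<^sup>2 + \<eta>\<^sup>2) \<le> t + \<eta>"
    using assms by (intro real_le_lsqrt) (simp_all add: power2_eq_square algebra_simps)
  then show ?thesis
    unfolding Re_csqrt_Complex by (intro real_sqrt_le_mono) simp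
qed

text \<open>The real part of csqrt_barrier smooths \<surd>(x - a) + \<kappa> x: as csqrt_barrier is holomorphic
  on the half-plane Im z > -\<eta>, its real part is smooth on all of \<real>, unlike \<surd>(x - a).\<close>

definition csqrt_barrier :: "real \<Rightarrow> real \<Rightarrow> real \<Rightarrow> complex \<Rightarrow> complex" where
  "csqrt_barrier a \<eta> \<kappa> z = csqrt (z - of_real a + \<i> * of_real \<eta>) + of_real \<kappa> * z"

definition sqrt_barrier :: "real \<Rightarrow> real \<Rightarrow> real \<Rightarrow> real \<Rightarrow> real" where
  "sqrt_barrier a \<eta> \<kappa> x = Re (csqrt_barrier a \<eta> \<kappa> (of_real x))"

lemma sqrt_barrier_eq: "sqrt_barrier a \<eta> \<kappa> x = Re (csqrt (Complex (x - a) \<eta>)) + \<kappa> * x"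
  by (simp add: sqrt_barrier_def csqrt_barrier_def Complex_eq del: csqrt.simps)

lemma csqrt_barrier_arg_notin_nonpos_Reals:
  "-\<eta> < Im z \<Longrightarrow> z - of_real a + \<i> * of_real \<eta> \<notin> \<real>\<^sub>\<le>\<^sub>0"
  by (auto simp: complex_nonpos_Reals_iff)

lemma csqrt_barrier_holomorphic: "csqrt_barrier a \<eta> \<kappa> holomorphic_on {z. -\<eta> < Im z}"
  unfolding csqrt_barrier_def [abs_def]
  by (intro holomorphic_intros) (auto dest: csqrt_barrier_arg_notin_nonpos_Reals)

lemma has_field_derivative_csqrt_barrier:
  assumes "-\<eta> < Im z"
  shows "(csqrt_barrier a \<eta> \<kappa> has_field_derivative
           inverse (2 * csqrt (z - of_real a + \<i> * of_real \<eta>)) + of_real \<kappa>) (at z)"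
  unfolding csqrt_barrier_def [abs_def]
  using csqrt_barrier_arg_notin_nonpos_Reals[OF assms]
  by (auto intro!: derivative_eq_intros simp: field_simps)

lemma deriv2_csqrt_barrier:
  assumes "-\<eta> < Im z"
  shows "deriv (deriv (csqrt_barrier a \<eta> \<kappa>)) z
           = - 2 * inverse (2 * csqrt (z - of_real a + \<i> * of_real \<eta>)) ^ 3"
proof -
  let ?S = "{z. -\<eta> < Im z}" and ?c = "\<lambda>z. csqrt (z - of_real a + \<i> * of_real \<eta>)"
  have "z - of_real a + \<i> * of_real \<eta> \<noteq> 0"
    using assms by (auto simp: complex_eq_iff)
  then have "2 * ?c z \<noteq> 0"
    by simp
  have "((\<lambda>w. w - of_real a + \<i> * of_real \<eta>) has_field_derivative 1) (at z)"
    by (auto intro!: derivative_eq_intros)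
  from has_field_derivative_csqrt'[OF this csqrt_barrier_arg_notin_nonpos_Reals[OF assms]]
  have "((\<lambda>w. 2 * ?c w) has_field_derivative 2 * (1 / (2 * ?c z))) (at z)"
    by (rule DERIV_cmult)
  from DERIV_inverse'[OF this \<open>2 * ?c z \<noteq> 0\<close>]
  have inv: "((\<lambda>w. inverse (2 * ?c w)) has_field_derivative
               - (inverse (2 * ?c z) * (2 * (1 / (2 * ?c z))) * inverse (2 * ?c z))) (at z)" .
  have cube: "- (inverse x * (2 * (1 / x)) * inverse x) + 0 = - 2 * inverse x ^ 3" for x :: complex
    by (simp add: power3_eq_cube divide_inverse)
  have "((\<lambda>w. inverse (2 * ?c w) + of_real \<kappa>) has_field_derivative
               - 2 * inverse (2 * ?c z) ^ 3) (at z)"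
    using DERIV_add[OF inv DERIV_const] cube by (rule DERIV_cong)
  then have "(deriv (csqrt_barrier a \<eta> \<kappa>) has_field_derivative - 2 * inverse (2 * ?c z) ^ 3) (at z)"
  proof (rule has_field_derivative_transform_within_open[OF _ open_halfspace_Im_gt])
    show "z \<in> ?S"
      using assms by simp
    fix w assume "w \<in> ?S"
    then show "inverse (2 * ?c w) + of_real \<kappa> = deriv (csqrt_barrier a \<eta> \<kappa>) w"
      by (intro DERIV_imp_deriv[symmetric] has_field_derivative_csqrt_barrier) simp
  qed
  then show ?thesis
    by (rule DERIV_imp_deriv)
qed

lemma smooth_on_sqrt_barrier: "0 < \<eta> \<Longrightarrow> smooth_on A (sqrt_barrier a \<eta> \<kappa>)"
  unfolding sqrt_barrier_def [abs_def]
  by (rule smooth_on_Re_holomorphic[OF csqrt_barrier_holomorphic open_halfspace_Im_gt]) simp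

lemma continuous_on_sqrt_barrier: "0 < \<eta> \<Longrightarrow> continuous_on A (sqrt_barrier a \<eta> \<kappa>)"
  unfolding sqrt_barrier_def [abs_def]
  by (rule continuous_on_Re_holomorphic[OF csqrt_barrier_holomorphic open_halfspace_Im_gt]) simp

lemma curvature_lower_bound:
  fixes v \<kappa> D :: real
  assumes "0 \<le> v" "0 \<le> \<kappa>" "- 2 * v ^ 3 \<le> D"
  shows "- 2 * (v + \<kappa>) \<le> D / (1 + (v + \<kappa>)\<^sup>2)"
proof -
  have "v ^ 3 \<le> (v + \<kappa>) ^ 3"
    using assms by (simp add: power_mono)
  also have "\<dots> \<le> (v + \<kappa>) * (1 + (v + \<kappa>)\<^sup>2)"
    using assms by (simp add: power3_eq_cube power2_eq_square algebra_simps)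
  finally have "- 2 * (v + \<kappa>) * (1 + (v + \<kappa>)\<^sup>2) \<le> D"
    using assms(3) by linarith
  then show ?thesis
    by (simp add: pos_le_divide_eq add_pos_nonneg)
qed

lemma sqrt_barrier_deriv_bounds:
  assumes "0 < \<eta>" "0 \<le> \<kappa>"
  shows "\<kappa> \<le> deriv (sqrt_barrier a \<eta> \<kappa>) r"
    and "- 2 * deriv (sqrt_barrier a \<eta> \<kappa>) r
           \<le> deriv (deriv (sqrt_barrier a \<eta> \<kappa>)) r / (1 + (deriv (sqrt_barrier a \<eta> \<kappa>) r)\<^sup>2)"
proof -
  let ?F = "csqrt_barrier a \<eta> \<kappa>" and ?S = "{z. -\<eta> < Im z}"
  have F: "?F holomorphic_on ?S" "open ?S" "\<And>x::real. of_real x \<in> ?S"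
    using csqrt_barrier_holomorphic open_halfspace_Im_gt assms(1) by auto
  define w where "w = inverse (2 * csqrt (of_real r - of_real a + \<i> * of_real \<eta>))"
  have "0 \<le> Re w"
    using Re_csqrt[of "of_real r - of_real a + \<i> * of_real \<eta>"]
    by (simp add: w_def del: csqrt.simps)
  have "deriv (sqrt_barrier a \<eta> \<kappa>) r = Re (deriv ?F (of_real r))"
    using higher_deriv_Re_holomorphic[OF F, of 1] by (simp add: sqrt_barrier_def [abs_def])
  also have "\<dots> = Re w + \<kappa>"
    using has_field_derivative_csqrt_barrier[THEN DERIV_imp_deriv] assms(1) by (simp add: w_def)
  finally have d1: "deriv (sqrt_barrier a \<eta> \<kappa>) r = Re w + \<kappa>" .
  have "deriv (deriv (sqrt_barrier a \<eta> \<kappa>)) r = Re (deriv (deriv ?F) (of_real r))"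
    using higher_deriv_Re_holomorphic[OF F, of 2]
    by (simp add: sqrt_barrier_def [abs_def] numeral_2_eq_2)
  also have "\<dots> = - 2 * Re (w ^ 3)"
    using deriv2_csqrt_barrier assms(1) by (simp add: w_def)
  finally have d2: "deriv (deriv (sqrt_barrier a \<eta> \<kappa>)) r = - 2 * Re (w ^ 3)" .
  show "\<kappa> \<le> deriv (sqrt_barrier a \<eta> \<kappa>) r"
    using d1 \<open>0 \<le> Re w\<close> by simp
  show "- 2 * deriv (sqrt_barrier a \<eta> \<kappa>) r
           \<le> deriv (deriv (sqrt_barrier a \<eta> \<kappa>)) r / (1 + (deriv (sqrt_barrier a \<eta> \<kappa>) r)\<^sup>2)"
    unfolding d1 d2 using \<open>0 \<le> Re w\<close> assms(2) Re_power3_le[OF \<open>0 \<le> Re w\<close>]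
    by (intro curvature_lower_bound) simp_all
qed

lemma sqrt_barrier_bounds:
  assumes "0 < \<Delta>"
  shows "sqrt \<Delta> / 2 + \<kappa> * \<Delta> \<le> sqrt_barrier a (\<Delta> / 2) \<kappa> (a + \<Delta>) - sqrt_barrier a (\<Delta> / 2) \<kappa> a"
    and "\<kappa> * (a + \<Delta>) \<le> sqrt_barrier a (\<Delta> / 2) \<kappa> (a + \<Delta>)"
    and "a \<le> x \<Longrightarrow> sqrt_barrier a (\<Delta> / 2) \<kappa> x \<le> sqrt (x - a + \<Delta> / 4) + \<kappa> * x"
proof -
  have l_a: "sqrt_barrier a (\<Delta> / 2) \<kappa> a = sqrt \<Delta> / 2 + \<kappa> * a"
    using assms Re_csqrt_imaginary[of "\<Delta> / 2"]
    by (simp add: sqrt_barrier_eq real_sqrt_divide del: csqrt.simps)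
  have l_b: "sqrt \<Delta> + \<kappa> * (a + \<Delta>) \<le> sqrt_barrier a (\<Delta> / 2) \<kappa> (a + \<Delta>)"
    using sqrt_le_Re_csqrt[of \<Delta>] assms by (simp add: sqrt_barrier_eq del: csqrt.simps)
  show "sqrt \<Delta> / 2 + \<kappa> * \<Delta> \<le> sqrt_barrier a (\<Delta> / 2) \<kappa> (a + \<Delta>) - sqrt_barrier a (\<Delta> / 2) \<kappa> a"
    using l_a l_b by (simp add: algebra_simps)
  show "\<kappa> * (a + \<Delta>) \<le> sqrt_barrier a (\<Delta> / 2) \<kappa> (a + \<Delta>)"
    using l_b real_sqrt_ge_zero[of \<Delta>] assms by linarith
  show "a \<le> x \<Longrightarrow> sqrt_barrier a (\<Delta> / 2) \<kappa> x \<le> sqrt (x - a + \<Delta> / 4) + \<kappa> * x"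
    using Re_csqrt_le[of "x - a" "\<Delta> / 2"] assms
    by (simp add: sqrt_barrier_eq del: csqrt.simps)
qed

lemma exists_interior_min_diff_sqrt_barrier:
  fixes h :: "real \<Rightarrow> real"
  assumes "continuous_on {a..\<delta>} h" "1 \<le> h \<delta>" "0 \<le> \<kappa>" "\<kappa> * \<delta> \<le> 1/4"
    and "0 \<le> a" "0 < \<Delta>" "a + \<Delta> \<le> \<delta>" "\<delta> \<le> 1/4"
    and "h (a + \<Delta>) < 1/8" "h (a + \<Delta>) - h a < sqrt \<Delta> / 2"
  defines "l \<equiv> sqrt_barrier a (\<Delta> / 2) \<kappa>"
  obtains r where "r \<in> {a<..<\<delta>}" "\<forall>y\<in>{a..\<delta>}. h r - l r \<le> h y - l y"
proof (rule continuous_attains_inf_interior)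
  show "continuous_on {a..\<delta>} (\<lambda>y. h y - l y)"
    unfolding l_def using assms(1,6) by (intro continuous_intros continuous_on_sqrt_barrier) auto
  show "a + \<Delta> \<in> {a..\<delta>}"
    using assms(6,7) by simp
  show "h (a + \<Delta>) - l (a + \<Delta>) < h a - l a"
    using assms(10) sqrt_barrier_bounds(1)[OF assms(6), of \<kappa> a] mult_nonneg_nonneg[OF assms(3), of \<Delta>]
      assms(6) unfolding l_def by linarith
  have "sqrt (\<delta> - a + \<Delta> / 4) \<le> 5/8"
    using assms(5-8) by (intro real_le_lsqrt) (auto simp: power2_eq_square)
  moreover have "0 \<le> \<kappa> * (a + \<Delta>)" "a \<le> \<delta>"
    using assms(3,5-7) by simp_all
  ultimately show "h (a + \<Delta>) - l (a + \<Delta>) < h \<delta> - l \<delta>"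
    using sqrt_barrier_bounds(2)[OF assms(6), of \<kappa> a] sqrt_barrier_bounds(3)[OF assms(6), of a \<delta> \<kappa>]
      assms(2,4,9) unfolding l_def by linarith
qed

theorem lemma2p5:
  fixes \<delta> :: real and h :: "real \<Rightarrow> real"
  assumes "0 < \<delta>" and "\<delta> \<le> 1/4"
    and "continuous_on {0..\<delta>} h"
    and "h 0 = 0" and "h \<delta> = 1"
  shows "\<exists>r l. r \<in> {0<..<\<delta>} \<and> smooth_on {0..\<delta>} l
    \<and> (\<exists>e>0. \<forall>y\<in>{0..\<delta>}. \<bar>y - r\<bar> < e \<longrightarrow> h r - l r \<le> h y - l y)
    \<and> deriv l r \<ge> 1 / (4 * \<delta>)
    \<and> deriv (deriv l) r / (1 + (deriv l r)\<^sup>2) \<ge> - 2 * deriv l r"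
proof -
  define \<kappa> where "\<kappa> = 1 / (4 * \<delta>)"
  have "0 < \<kappa>" "\<kappa> * \<delta> = 1/4"
    using assms(1) by (simp_all add: \<kappa>_def)
  obtain x\<^sub>1 where x\<^sub>1: "0 < x\<^sub>1" "x\<^sub>1 \<le> \<delta>" and h_small: "\<forall>x\<in>{0..x\<^sub>1}. h x < 1/8"
    using continuous_on_less_near_left[OF assms(3,1), of "1/8"] assms(4) by auto
  obtain a \<Delta> where a\<Delta>: "0 \<le> a" "0 < \<Delta>" "a + \<Delta> \<le> x\<^sub>1" and incr: "h (a + \<Delta>) - h a < 1/2 * sqrt \<Delta>"
    using exists_small_sqrt_increment[OF x\<^sub>1(1), of "1/2" h] by auto
  define l where "l = sqrt_barrier a (\<Delta> / 2) \<kappa>"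
  obtain r where r: "r \<in> {a<..<\<delta>}" and min: "\<forall>y\<in>{a..\<delta>}. h r - l r \<le> h y - l y"
  proof (rule exists_interior_min_diff_sqrt_barrier[of a \<delta> h \<kappa> \<Delta>, folded l_def])
    show "continuous_on {a..\<delta>} h"
      using assms(3) by (rule continuous_on_subset) (use a\<Delta>(1) in auto)
    show "h (a + \<Delta>) < 1/8"
      using h_small a\<Delta> by auto
  qed (use a\<Delta> incr x\<^sub>1 assms(2,5) \<open>0 < \<kappa>\<close> \<open>\<kappa> * \<delta> = 1/4\<close> in auto)
  have "\<exists>e>0. \<forall>y\<in>{0..\<delta>}. \<bar>y - r\<bar> < e \<longrightarrow> h r - l r \<le> h y - l y"
    using r min by (intro exI[of _ "min (r - a) (\<delta> - r)"]) auto
  moreover have "deriv l r \<ge> 1 / (4 * \<delta>)"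
    and "deriv (deriv l) r / (1 + (deriv l r)\<^sup>2) \<ge> - 2 * deriv l r"
    using sqrt_barrier_deriv_bounds[of "\<Delta> / 2" \<kappa> a r] a\<Delta>(2) \<open>0 < \<kappa>\<close> by (simp_all add: l_def \<kappa>_def)
  moreover have "r \<in> {0<..<\<delta>}" "smooth_on {0..\<delta>} l"
    using r a\<Delta>(1,2) by (auto simp: l_def smooth_on_sqrt_barrier)
  ultimately show ?thesis
    by blast
qed

end
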